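(* Let $n$ be a positive even integer and $m = n^2+1$. Let $Q_n = (a_{i,j})_{1\le i,j\le n}$ be the $n\times n$ matrix with entries in $\mathbb{Z}/m\mathbb{Z}$ given by $a_{i,j} = j + (i-1)n$, and let $\rho(Q_n)$ be the $n\times n$ matrix whose $(i,j)$ entry is $a_{j,n-i+1}$. Writing $\left(\frac{A}{m}\right)$ for the matrix obtained by applying the Jacobi symbol $\left(\frac{\cdot}{m}\right)$ to each entry of $A$, we have $$\left(\frac{\rho(Q_n)}{m}\right) = \begin{cases} \left(\frac{Q_n}{m}\right) & \text{if } n\equiv 0 \pmod 4,\\ -\left(\frac{Q_n}{m}\right) & \text{if } n\equiv 2\pmod 4.\end{cases}$$
   Context: For odd $m>2$ with prime factorization $m=\prod_{k=1}^K p_k$ (primes not necessarily distinct), the Jacobi symbol is $\left(\frac{a}{m}\right)=\prod_{k=1}^K \left(\frac{a}{p_k}\right)$, where $\left(\frac{a}{p}\right)$ is the Legendre symbol; it is well-defined on $\mathbb{Z}/m\mathbb{Z}$. *)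

theory Defs
  imports "HOL-Number_Theory.Number_Theory"
begin

definition Jacobi :: "int \<Rightarrow> nat \<Rightarrow> int" where
  "Jacobi a m = (\<Prod>p \<in># prime_factorization m. Legendre a (int p))"

text \<open>Entries of Q_n (1-indexed): a_{i,j} = j + (i-1) n, as an integer representative
  of a residue modulo m = n^2+1 (the Jacobi symbol only depends on the residue).\<close>
definition Qn :: "nat \<Rightarrow> nat \<Rightarrow> nat \<Rightarrow> int" where
  "Qn n i j = int j + (int i - 1) * int n"

definition rhoQn :: "nat \<Rightarrow> nat \<Rightarrow> nat \<Rightarrow> int" where
  "rhoQn n i j = Qn n j (n - i + 1)"

end

theory Submission
  imports Defs
begin

text \<open>Rotating \<open>Q\<^sub>n\<close> multiplies every entry by \<open>n\<close> modulo \<open>m\<close>: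
  \<open>n (j + (i - 1) n) = j n + (i - 1) n\<^sup>2 \<equiv> j n - i + 1\<close>, the entry \<open>a\<^sub>j\<^sub>,\<^sub>n\<^sub>-\<^sub>i\<^sub>+\<^sub>1\<close>.
  Hence \<open>(\<rho>(Q\<^sub>n)/m) = (n/m) (Q\<^sub>n/m)\<close> entrywise, and it remains to compute \<open>(n/m)\<close>.
  As \<open>n\<^sup>2 \<equiv> -1 (mod m)\<close>, every prime \<open>p\<close> dividing \<open>m\<close> satisfies \<open>p \<equiv> 1 (mod 4)\<close> and, by
  Euler's criterion, \<open>(n/p) \<equiv> n\<^bsup>(p-1)/2\<^esup> \<equiv> (-1)\<^bsup>(p-1)/4\<^esup>\<close>. The sign \<open>x \<mapsto> (-1)\<^bsup>(x-1)/4\<^esup>\<close> is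
  multiplicative on numbers \<open>\<equiv> 1 (mod 4)\<close>, so \<open>(n/m) = (-1)\<^bsup>(m-1)/4\<^esup> = (-1)\<^bsup>n\<^sup>2/4\<^esup>\<close>,
  which is \<open>1\<close> exactly when \<open>4\<close> divides \<open>n\<close>.\<close>

lemma cong_sign_imp_eq:
  fixes x y p :: int
  assumes "x \<in> {-1, 0, 1}" "y \<in> {-1, 0, 1}" "[x = y] (mod p)" "p > 2"
  shows "x = y"
proof (rule ccontr)
  assume "x \<noteq> y"
  moreover have "p dvd x - y" using assms(3) by (simp add: cong_iff_dvd_diff)
  ultimately have "\<bar>p\<bar> \<le> \<bar>x - y\<bar>" by (intro dvd_imp_le_int) simp_all
  moreover have "\<bar>x - y\<bar> \<le> 2" using assms(1,2) by auto
  ultimately show False using assms(4) by simp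
qed

lemma Legendre_range: "Legendre a p \<in> {-1, 0, 1}"
  by (simp add: Legendre_def)

lemma Legendre_eqI:
  assumes "prime p" "p > 2" "x \<in> {-1, 0, 1}" "[a ^ ((p - 1) div 2) = x] (mod int p)"
  shows "Legendre a (int p) = x"
proof (rule cong_sign_imp_eq[OF Legendre_range assms(3)])
  show "[Legendre a (int p) = x] (mod int p)"
    using euler_criterion[OF assms(1,2)] assms(4) by (rule cong_trans)
  show "int p > 2" using assms(2) by simp
qed

lemma Legendre_mult:
  assumes "prime p" "p > 2"
  shows "Legendre (a * b) (int p) = Legendre a (int p) * Legendre b (int p)"
proof (rule Legendre_eqI[OF assms])
  show "Legendre a (int p) * Legendre b (int p) \<in> {-1, 0, 1}"
    using Legendre_range[of a "int p"] Legendre_range[of b "int p"] by auto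
  show "[(a * b) ^ ((p - 1) div 2) = Legendre a (int p) * Legendre b (int p)] (mod int p)"
    unfolding power_mult_distrib
    using euler_criterion[OF assms, of a, THEN cong_sym] euler_criterion[OF assms, of b, THEN cong_sym]
    by (rule cong_mult)
qed

lemma Legendre_cong:
  assumes "prime p" "p > 2" "[a = b] (mod int p)"
  shows "Legendre a (int p) = Legendre b (int p)"
proof (rule Legendre_eqI[OF assms(1,2) Legendre_range])
  have "[a ^ ((p - 1) div 2) = b ^ ((p - 1) div 2)] (mod int p)"
    using assms(3) by (rule cong_pow)
  then show "[a ^ ((p - 1) div 2) = Legendre b (int p)] (mod int p)"
    using cong_sym[OF euler_criterion[OF assms(1,2)]] by (rule cong_trans)
qed

lemma prime_factor_of_odd_gt_two:
  assumes "odd m" "p \<in> prime_factors m"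
  shows "p > (2 :: nat)"
proof -
  have "p \<noteq> 2" using assms by (auto dest: in_prime_factors_imp_dvd)
  moreover have "p \<ge> 2" using assms(2) by (simp add: in_prime_factors_iff prime_ge_2_nat)
  ultimately show ?thesis by simp
qed

lemma Jacobi_mult:
  assumes "odd m"
  shows "Jacobi (a * b) m = Jacobi a m * Jacobi b m"
proof -
  have "Legendre (a * b) (int p) = Legendre a (int p) * Legendre b (int p)"
    if "p \<in> prime_factors m" for p
    using that prime_factor_of_odd_gt_two[OF assms] by (intro Legendre_mult) auto
  then have "(\<Prod>p\<in>#prime_factorization m. Legendre (a * b) (int p)) =
      (\<Prod>p\<in>#prime_factorization m. Legendre a (int p) * Legendre b (int p))"
    by (intro arg_cong[where f = prod_mset] image_mset_cong) simp
  then show ?thesis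
    unfolding Jacobi_def by (simp add: prod_mset.distrib)
qed

lemma Jacobi_cong:
  assumes "odd m" "[a = b] (mod int m)"
  shows "Jacobi a m = Jacobi b m"
proof -
  have "Legendre a (int p) = Legendre b (int p)" if "p \<in> prime_factors m" for p
  proof (rule Legendre_cong)
    show "prime p" "p > 2" using that prime_factor_of_odd_gt_two[OF assms(1)] by auto
    show "[a = b] (mod int p)"
      using in_prime_factors_imp_dvd[OF that] by (intro cong_dvd_modulus[OF assms(2)]) simp
  qed
  then show ?thesis
    unfolding Jacobi_def by (intro arg_cong[where f = prod_mset] image_mset_cong) simp
qed

lemma Legendre_sqrt_minus_one:
  assumes p: "prime p" "p > 2" and sq: "[a\<^sup>2 = -1] (mod int p)"
  shows "p mod 4 = 1" and "Legendre a (int p) = (-1) ^ ((p - 1) div 4)"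
proof -
  define e where "e = (p - 1) div 2"
  have "odd p" using p prime_odd_nat by blast
  then have p_e: "p - 1 = 2 * e" unfolding e_def by presburger
  have one_ncong: "\<not> [1 = -1] (mod int p)"
  proof
    assume "[1 = -1] (mod int p)"
    then have "int p dvd 2" by (simp add: cong_iff_dvd_diff)
    then show False using p by (auto dest: zdvd_imp_le)
  qed
  have "\<not> [a = 0] (mod int p)"
  proof
    assume "[a = 0] (mod int p)"
    then have "[a\<^sup>2 = 0\<^sup>2] (mod int p)" by (rule cong_pow)
    with cong_sym[OF sq] have "[-1 = 0] (mod int p)" by (simp add: cong_trans)
    then have "int p dvd 1" by (simp add: cong_iff_dvd_diff)
    then show False using p by simp
  qed
  then have L: "Legendre a (int p) \<in> {-1, 1}" by (auto simp: Legendre_def)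
  have euler: "[Legendre a (int p) = a ^ e] (mod int p)"
    unfolding e_def using p by (rule euler_criterion)
  have pow: "[a ^ (2 * k) = (-1) ^ k] (mod int p)" for k
    unfolding power_mult using sq by (rule cong_pow)
  \<comment> \<open>Squaring Euler's criterion stands in for Fermat's little theorem: \<open>a\<^bsup>2e\<^esup> \<equiv> 1\<close>.\<close>
  have "even e"
  proof (rule ccontr)
    assume "odd e"
    have "[1 = Legendre a (int p) ^ 2] (mod int p)" using L by auto
    also have "[Legendre a (int p) ^ 2 = a ^ (2 * e)] (mod int p)"
      using cong_pow[OF euler, of 2] by (simp add: power_mult mult.commute)
    also have "[a ^ (2 * e) = (-1) ^ e] (mod int p)" by (rule pow)
    finally show False using \<open>odd e\<close> one_ncong by simp
  qed
  then obtain f where e_f: "e = 2 * f" by blast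
  then show "p mod 4 = 1" using p_e p by presburger
  have "[Legendre a (int p) = (-1) ^ f] (mod int p)"
    using euler pow[of f] unfolding e_f by (rule cong_trans)
  then have "Legendre a (int p) = (-1) ^ f"
    using p by (intro cong_sign_imp_eq[OF Legendre_range]) (auto simp: minus_one_power_iff)
  moreover have "f = (p - 1) div 4" using p_e e_f by simp
  ultimately show "Legendre a (int p) = (-1) ^ ((p - 1) div 4)" by simp
qed

lemma minus_one_power_quarter_mult:
  fixes x y :: nat
  assumes "x mod 4 = 1" "y mod 4 = 1"
  shows "(-1 :: int) ^ ((x * y - 1) div 4) = (-1) ^ ((x - 1) div 4) * (-1) ^ ((y - 1) div 4)"
proof -
  obtain s t where x: "x = 4 * s + 1" and y: "y = 4 * t + 1"
    using assms by (metis div_mult_mod_eq mult.commute)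
  have "x * y - 1 = 4 * (2 * (2 * s * t) + s + t)" unfolding x y by (simp add: algebra_simps)
  then have "(x * y - 1) div 4 = 2 * (2 * s * t) + s + t" by simp
  moreover have "(x - 1) div 4 = s" "(y - 1) div 4 = t" unfolding x y by simp_all
  ultimately show ?thesis by (simp add: power_add power_mult)
qed

lemma prod_mset_cong_one:
  fixes M :: "'a :: unique_euclidean_semiring multiset"
  assumes "\<And>x. x \<in># M \<Longrightarrow> [x = 1] (mod k)"
  shows "[\<Prod>\<^sub># M = 1] (mod k)"
  using assms
proof (induction M)
  case empty
  then show ?case by simp
next
  case (add x M)
  then have "[x * \<Prod>\<^sub># M = 1 * 1] (mod k)" by (intro cong_mult) auto
  then show ?case by simp
qed

lemma prod_mset_minus_one_power_quarter:
  fixes M :: "nat multiset"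
  assumes "\<And>p. p \<in># M \<Longrightarrow> p mod 4 = 1"
  shows "(\<Prod>p\<in>#M. (-1 :: int) ^ ((p - 1) div 4)) = (-1) ^ ((\<Prod>\<^sub># M - 1) div 4)"
  using assms
proof (induction M)
  case empty
  then show ?case by simp
next
  case (add x M)
  then have "[\<Prod>\<^sub># M = 1] (mod 4)" by (intro prod_mset_cong_one) (simp add: cong_def)
  then have "x mod 4 = 1" "\<Prod>\<^sub># M mod 4 = 1" using add.prems by (auto simp: cong_def)
  from minus_one_power_quarter_mult[OF this] add show ?case by simp
qed

lemma Jacobi_sqrt_minus_one:
  assumes "odd m" and sq: "[a\<^sup>2 = -1] (mod int m)"
  shows "Jacobi a m = (-1) ^ ((m - 1) div 4)"
proof -
  have prime_factor: "p mod 4 = 1 \<and> Legendre a (int p) = (-1) ^ ((p - 1) div 4)"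
    if "p \<in> prime_factors m" for p
  proof -
    have "prime p" "p > 2" using that prime_factor_of_odd_gt_two[OF assms(1)] by auto
    moreover have "[a\<^sup>2 = -1] (mod int p)"
      using in_prime_factors_imp_dvd[OF that] by (intro cong_dvd_modulus[OF sq]) simp
    ultimately show ?thesis by (simp add: Legendre_sqrt_minus_one)
  qed
  then have "Jacobi a m = (\<Prod>p\<in>#prime_factorization m. (-1) ^ ((p - 1) div 4))"
    unfolding Jacobi_def by (intro arg_cong[where f = prod_mset] image_mset_cong) simp
  also have "\<dots> = (-1) ^ ((\<Prod>\<^sub># (prime_factorization m) - 1) div 4)"
    using prime_factor by (intro prod_mset_minus_one_power_quarter) simp
  also have "\<Prod>\<^sub># (prime_factorization m) = m"
    using odd_pos[OF \<open>odd m\<close>] by (rule prod_mset_prime_factorization_nat)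
  finally show ?thesis .
qed

lemma rhoQn_cong_mult:
  assumes "i \<le> n"
  shows "[rhoQn n i j = int n * Qn n i j] (mod int (n\<^sup>2 + 1))"
proof -
  have "int n * Qn n i j - rhoQn n i j = (int i - 1) * int (n\<^sup>2 + 1)"
    using assms by (simp add: rhoQn_def Qn_def of_nat_diff power2_eq_square algebra_simps)
  then show ?thesis
    by (metis cong_iff_dvd_diff cong_sym dvd_triv_right)
qed

lemma minus_one_power_square_quarter:
  fixes n :: nat
  assumes "even n"
  shows "(-1 :: int) ^ (n\<^sup>2 div 4) = (if n mod 4 = 0 then 1 else -1)"
proof -
  obtain k where n: "n = 2 * k" using assms by blast
  have "n\<^sup>2 div 4 = k * k" unfolding n by (simp add: power2_eq_square)
  moreover have "n mod 4 = 0 \<longleftrightarrow> even k" unfolding n by presburger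
  ultimately show ?thesis by (simp add: minus_one_power_iff)
qed

theorem theorem3:
  fixes n :: nat
  assumes "n > 0" and "even n"
  defines "m \<equiv> n^2 + 1"
  shows "\<forall>i\<in>{1..n}. \<forall>j\<in>{1..n}.
           Jacobi (rhoQn n i j) m =
             (if n mod 4 = 0 then Jacobi (Qn n i j) m else - Jacobi (Qn n i j) m)"
proof (intro ballI)
  fix i j assume "i \<in> {1..n}" "j \<in> {1..n}"
  have "odd m" using \<open>even n\<close> unfolding m_def by simp
  have "[(int n)\<^sup>2 = -1] (mod int m)"
    unfolding m_def by (simp add: cong_iff_dvd_diff add.commute)
  then have "Jacobi (int n) m = (-1) ^ ((m - 1) div 4)"
    by (rule Jacobi_sqrt_minus_one[OF \<open>odd m\<close>])
  also have "\<dots> = (if n mod 4 = 0 then 1 else -1)"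
    unfolding m_def using minus_one_power_square_quarter[OF \<open>even n\<close>] by simp
  finally have Jacobi_n: "Jacobi (int n) m = (if n mod 4 = 0 then 1 else -1)" .
  have "[rhoQn n i j = int n * Qn n i j] (mod int m)"
    using \<open>i \<in> {1..n}\<close> unfolding m_def by (intro rhoQn_cong_mult) simp
  then have "Jacobi (rhoQn n i j) m = Jacobi (int n * Qn n i j) m"
    by (rule Jacobi_cong[OF \<open>odd m\<close>])
  also have "\<dots> = Jacobi (int n) m * Jacobi (Qn n i j) m"
    using \<open>odd m\<close> by (rule Jacobi_mult)
  finally show "Jacobi (rhoQn n i j) m =
      (if n mod 4 = 0 then Jacobi (Qn n i j) m else - Jacobi (Qn n i j) m)"
    unfolding Jacobi_n by simp
qed

end
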